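(* Let $\mathbf{X}=(X_1,\dots,X_p)$ take values in $\{1,\dots,m\}^p$ and $Y$ take values in $\{0,1\}$, and let $\mathcal{C}\neq\emptyset$ be the class of joint distributions of $(\mathbf{X},Y)$ with prescribed pairwise marginals $\mathbb{P}(X_i=x_i,X_j=x_j)=\mu^{ij}_{x_ix_j}$ and $\mathbb{P}(X_i=x_i,Y=y)=\mu^i_{x_iy}$ for all $i,j$, $x_i,x_j$, $y$. Then $$\rho_m^{\mathrm{lb},\mathcal{C}}=\min_{\mathbb{P}_{\mathbf{X},Y}\in\mathcal{C}}\rho_m(\mathbf{X},Y)$$ if and only if there exists a distribution $\mathbb{P}\in\mathcal{C}$ and functions $f_i:\{1,\dots,m\}\to\mathbb{R}$, $i=1,\dots,p$, such that $\mathbb{E}_{\mathbb{P}}[Y\mid\mathbf{X}]=\sum_{i=1}^p f_i(X_i)$.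
   Context: The HGR maximal correlation under a joint law $\mathbb{P}$ is $\rho_m(\mathbf{X},Y)=\sup_{f,g}\mathbb{E}_{\mathbb{P}}[f(\mathbf{X})g(Y)]$ over all functions $f,g$ with $\mathbb{E}[f(\mathbf{X})]=\mathbb{E}[g(Y)]=0$, $\mathbb{E}[f^2(\mathbf{X})]=\mathbb{E}[g^2(Y)]=1$. The quantity $\rho_m^{\mathrm{lb}}(\mathbf{X},Y)$ is defined by the same maximization but with $f$ restricted to separable functions $f(\mathbf{X})=\sum_{i=1}^p\xi_i(X_i)$, $\xi_i:\{1,\dots,m\}\to\mathbb{R}$. This quantity depends only on the pairwise marginals, hence takes the same value for all $\mathbb{P}\in\mathcal{C}$; this common value is denoted $\rho_m^{\mathrm{lb},\mathcal{C}}$. Throughout, $0<\mathbb{P}(Y=1)<1$. *)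

theory Defs
  imports Main "HOL-Library.FuncSet" Complex_Main
begin

text \<open>Sample space of X = (X_1,...,X_p): vectors indexed by i < p with values in {1..m}.
  Y takes values 0 or 1 (as naturals). A joint law P is a function P x y (mass of (X,Y)=(x,y)).\<close>

definition Xsp :: "nat \<Rightarrow> nat \<Rightarrow> (nat \<Rightarrow> nat) set" where
  "Xsp p m = PiE {..<p} (\<lambda>_. {1..m})"

definition expect :: "nat \<Rightarrow> nat \<Rightarrow> ((nat \<Rightarrow> nat) \<Rightarrow> nat \<Rightarrow> real)
    \<Rightarrow> ((nat \<Rightarrow> nat) \<Rightarrow> nat \<Rightarrow> real) \<Rightarrow> real" where
  "expect p m P h = (\<Sum>x\<in>Xsp p m. \<Sum>y\<in>{0,1}. P x y * h x y)"

definition is_dist :: "nat \<Rightarrow> nat \<Rightarrow> ((nat \<Rightarrow> nat) \<Rightarrow> nat \<Rightarrow> real) \<Rightarrow> bool" where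
  "is_dist p m P \<longleftrightarrow> (\<forall>x\<in>Xsp p m. \<forall>y\<in>{0,1}. 0 \<le> P x y) \<and> expect p m P (\<lambda>_ _. 1) = 1"

definition classC :: "nat \<Rightarrow> nat \<Rightarrow> (nat \<Rightarrow> nat \<Rightarrow> nat \<Rightarrow> nat \<Rightarrow> real)
    \<Rightarrow> (nat \<Rightarrow> nat \<Rightarrow> nat \<Rightarrow> real) \<Rightarrow> ((nat \<Rightarrow> nat) \<Rightarrow> nat \<Rightarrow> real) set" where
  "classC p m mu2 mu1 = {P. is_dist p m P \<and>
     (\<forall>i<p. \<forall>j<p. \<forall>a\<in>{1..m}. \<forall>b\<in>{1..m}.
        expect p m P (\<lambda>x y. if x i = a \<and> x j = b then 1 else 0) = mu2 i j a b) \<and>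
     (\<forall>i<p. \<forall>a\<in>{1..m}. \<forall>y\<in>{0,1}.
        expect p m P (\<lambda>x y'. if x i = a \<and> y' = y then 1 else 0) = mu1 i a y)}"

definition hgr_feasible :: "nat \<Rightarrow> nat \<Rightarrow> ((nat \<Rightarrow> nat) \<Rightarrow> nat \<Rightarrow> real)
    \<Rightarrow> ((nat \<Rightarrow> nat) \<Rightarrow> real) \<Rightarrow> (nat \<Rightarrow> real) \<Rightarrow> bool" where
  "hgr_feasible p m P f g \<longleftrightarrow>
     expect p m P (\<lambda>x y. f x) = 0 \<and> expect p m P (\<lambda>x y. g y) = 0 \<and>
     expect p m P (\<lambda>x y. (f x)\<^sup>2) = 1 \<and> expect p m P (\<lambda>x y. (g y)\<^sup>2) = 1"

definition rho_m :: "nat \<Rightarrow> nat \<Rightarrow> ((nat \<Rightarrow> nat) \<Rightarrow> nat \<Rightarrow> real) \<Rightarrow> real" where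
  "rho_m p m P = Sup {expect p m P (\<lambda>x y. f x * g y) | f g. hgr_feasible p m P f g}"

definition separable :: "nat \<Rightarrow> nat \<Rightarrow> ((nat \<Rightarrow> nat) \<Rightarrow> real) \<Rightarrow> bool" where
  "separable p m f \<longleftrightarrow> (\<exists>\<xi>::nat \<Rightarrow> nat \<Rightarrow> real. \<forall>x\<in>Xsp p m. f x = (\<Sum>i<p. \<xi> i (x i)))"

definition rho_lb :: "nat \<Rightarrow> nat \<Rightarrow> ((nat \<Rightarrow> nat) \<Rightarrow> nat \<Rightarrow> real) \<Rightarrow> real" where
  "rho_lb p m P = Sup {expect p m P (\<lambda>x y. f x * g y) | f g.
       hgr_feasible p m P f g \<and> separable p m f}"

text \<open>Common value of rho_lb over the class C.\<close>
definition rho_lb_C :: "nat \<Rightarrow> nat \<Rightarrow> (nat \<Rightarrow> nat \<Rightarrow> nat \<Rightarrow> nat \<Rightarrow> real)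
    \<Rightarrow> (nat \<Rightarrow> nat \<Rightarrow> nat \<Rightarrow> real) \<Rightarrow> real" where
  "rho_lb_C p m mu2 mu1 = rho_lb p m (SOME P. P \<in> classC p m mu2 mu1)"

end

(*
  Write \<pi> = P(Y = 1) and r(x) = E[Y | X = x] - \<pi>. A standardised g(Y) is forced to be
  \<plusminus>(Y - \<pi>) / sqrt(\<pi>(1 - \<pi>)), so E[f(X) g(Y)] = \<plusminus>E[f r] / sqrt(\<pi>(1 - \<pi>)). Maximising over
  standardised f by Cauchy-Schwarz in L\<^sup>2(P\<^sub>X) gives \<rho>\<^sub>m = \<parallel>r\<parallel> / sqrt(\<pi>(1 - \<pi>)); restricting
  f to separable functions gives \<rho>\<^sup>l\<^sup>b = \<parallel>s\<parallel> / sqrt(\<pi>(1 - \<pi>)), where s is the orthogonal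
  projection of r onto the separable functions. Hence \<rho>\<^sub>m = \<rho>\<^sup>l\<^sup>b exactly when E[Y | X] is
  separable. For separable f the moments E[f(X) g(Y)] and E[f(X)\<^sup>2] only involve the pairwise
  marginals, so \<rho>\<^sup>l\<^sup>b is constant on C and bounds every \<rho>\<^sub>m there from below.
*)
theory Submission
  imports Defs "HOL-Analysis.Analysis"
begin

definition wdot :: "'a set \<Rightarrow> ('a \<Rightarrow> real) \<Rightarrow> ('a \<Rightarrow> real) \<Rightarrow> ('a \<Rightarrow> real) \<Rightarrow> real" where
  "wdot S w a b = (\<Sum>x\<in>S. w x * a x * b x)"

lemma wdot_commute: "wdot S w a b = wdot S w b a"
  unfolding wdot_def by (simp add: mult_ac)

lemma wdot_add_left: "wdot S w (\<lambda>x. a x + b x) c = wdot S w a c + wdot S w b c"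
  unfolding wdot_def by (simp add: algebra_simps sum.distrib)

lemma wdot_diff_left: "wdot S w (\<lambda>x. a x - b x) c = wdot S w a c - wdot S w b c"
  unfolding wdot_def by (simp add: algebra_simps sum_subtractf)

lemma wdot_scale_left: "wdot S w (\<lambda>x. t * a x) b = t * wdot S w a b"
  unfolding wdot_def by (simp add: algebra_simps sum_distrib_left)

lemma wdot_scale_right: "wdot S w a (\<lambda>x. t * b x) = t * wdot S w a b"
  unfolding wdot_def by (simp add: algebra_simps sum_distrib_left)

lemma wdot_diff_right: "wdot S w a (\<lambda>x. b x - c x) = wdot S w a b - wdot S w a c"
  unfolding wdot_def by (simp add: algebra_simps sum_subtractf)

lemma wdot_pythagoras:
  assumes "wdot S w (\<lambda>x. a x - b x) b = 0"
  shows "wdot S w a a = wdot S w b b + wdot S w (\<lambda>x. a x - b x) (\<lambda>x. a x - b x)"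
  using assms by (simp add: wdot_diff_left wdot_diff_right wdot_commute[of S w b a])

lemma wdot_lincomb_left:
  "wdot S w (\<lambda>x. \<Sum>j\<in>J. c j * v j x) b = (\<Sum>j\<in>J. c j * wdot S w (v j) b)"
  unfolding wdot_def by (simp add: sum_distrib_left sum_distrib_right mult_ac sum.swap[of _ S])

lemma wdot_orthogonal_lincomb:
  assumes "\<forall>j\<in>J. wdot S w a (v j) = 0"
  shows "wdot S w a (\<lambda>x. \<Sum>j\<in>J. c j * v j x) = 0"
  using assms by (simp add: wdot_commute[of S w a] wdot_lincomb_left)

lemma wdot_cong_support:
  assumes "\<And>x. x \<in> S \<Longrightarrow> w x \<noteq> 0 \<Longrightarrow> a x = a' x" "\<And>x. x \<in> S \<Longrightarrow> w x \<noteq> 0 \<Longrightarrow> b x = b' x"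
  shows "wdot S w a b = wdot S w a' b'"
  unfolding wdot_def by (intro sum.cong refl) (metis assms mult_zero_left)

lemma sum_lincomb_insert:
  fixes v :: "'b \<Rightarrow> 'a \<Rightarrow> real"
  assumes "finite F" "j0 \<notin> F"
  shows "(\<Sum>i\<in>insert j0 F. (if i = j0 then \<alpha> else c i - \<alpha> * d i) * v i x)
    = (\<Sum>i\<in>F. c i * v i x) + \<alpha> * (v j0 x - (\<Sum>i\<in>F. d i * v i x))"
proof -
  have "(\<Sum>i\<in>F. (if i = j0 then \<alpha> else c i - \<alpha> * d i) * v i x) = (\<Sum>i\<in>F. c i * v i x - \<alpha> * (d i * v i x))"
    using assms(2) by (intro sum.cong) (auto simp: algebra_simps)
  then show ?thesis
    using assms by (simp add: sum_subtractf sum_distrib_left algebra_simps)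
qed

context
  fixes S :: "'a set" and w :: "'a \<Rightarrow> real"
  assumes weight_nonneg: "\<And>x. x \<in> S \<Longrightarrow> 0 \<le> w x"
begin

lemma wdot_self_nonneg: "0 \<le> wdot S w a a"
  unfolding wdot_def by (rule sum_nonneg) (simp add: weight_nonneg mult.assoc)

lemma wdot_Cauchy_Schwarz: "\<bar>wdot S w a b\<bar> \<le> sqrt (wdot S w a a) * sqrt (wdot S w b b)"
proof -
  have "wdot S w c d = (\<Sum>x\<in>S. (sqrt (w x) * c x) * (sqrt (w x) * d x))" for c d
    unfolding wdot_def by (intro sum.cong) (auto simp: weight_nonneg real_sqrt_mult[symmetric] mult_ac)
  then have "(wdot S w a b)\<^sup>2 \<le> wdot S w a a * wdot S w b b"
    by (simp add: Cauchy_Schwarz_ineq_sum power2_eq_square[symmetric])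
  then show ?thesis
    by (metis real_sqrt_abs real_sqrt_le_mono real_sqrt_mult)
qed

lemma wdot_orthogonal_if_self_eq_0: "wdot S w u u = 0 \<Longrightarrow> wdot S w a u = 0"
  using wdot_Cauchy_Schwarz[of a u] by simp

lemma wdot_self_eq_0_iff:
  assumes "finite S"
  shows "wdot S w a a = 0 \<longleftrightarrow> (\<forall>x\<in>S. w x \<noteq> 0 \<longrightarrow> a x = 0)"
  unfolding wdot_def using assms
  by (subst sum_nonneg_eq_0_iff) (auto simp: weight_nonneg mult.assoc)

lemma wdot_self_pos:
  assumes "finite S" "x \<in> S" "x' \<in> S" "w x \<noteq> 0" "w x' \<noteq> 0" "a x \<noteq> a x'"
  shows "0 < wdot S w a a"
  using wdot_self_nonneg[of a] wdot_self_eq_0_iff[OF assms(1), of a] assms(2-6)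
  by (metis order_le_less)

lemma two_support_points:
  assumes "(\<Sum>x\<in>S. w x) = 1" "wdot S w a (\<lambda>_. 1) = 0" "wdot S w a a = 1"
  obtains x x' where "x \<in> S" "x' \<in> S" "x \<noteq> x'" "w x \<noteq> 0" "w x' \<noteq> 0"
proof -
  have "finite S" using assms(1) sum.infinite by fastforce
  obtain x where x: "x \<in> S" "w x \<noteq> 0"
    using assms(1) sum.neutral by (metis zero_neq_one)
  have "\<exists>x'\<in>S. x' \<noteq> x \<and> w x' \<noteq> 0"
  proof (rule ccontr)
    assume "\<not> ?thesis"
    then have single: "(\<Sum>y\<in>S. w y * h y) = w x * h x" for h
      by (subst sum.remove[OF \<open>finite S\<close> x(1)]) (auto intro!: sum.neutral)
    have "w x = 1" "w x * a x = 0" "w x * (a x * a x) = 1"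
      using assms single[of "\<lambda>_. 1"] single[of a] single[of "\<lambda>y. a y * a y"]
      unfolding wdot_def by (simp_all add: mult.assoc)
    then show False by simp
  qed
  with x that show thesis by blast
qed

text \<open>One Gram-Schmidt step: \<open>u\<close> is the part of \<open>v j\<^sub>0\<close> orthogonal to the \<open>v j\<close>, \<open>j \<in> F\<close>,
  and the residual of \<open>r\<close> is corrected along \<open>u\<close>.\<close>
lemma wdot_projection:
  assumes "finite J"
  shows "\<exists>c. \<forall>j\<in>J. wdot S w (\<lambda>x. r x - (\<Sum>i\<in>J. c i * v i x)) (v j) = 0"
  using assms
proof (induction J arbitrary: r rule: finite_induct)
  case empty
  then show ?case by simp
next
  case (insert j0 F)
  obtain c where c: "\<forall>j\<in>F. wdot S w (\<lambda>x. r x - (\<Sum>i\<in>F. c i * v i x)) (v j) = 0"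
    using insert.IH by blast
  obtain d where d: "\<forall>j\<in>F. wdot S w (\<lambda>x. v j0 x - (\<Sum>i\<in>F. d i * v i x)) (v j) = 0"
    using insert.IH by blast
  define \<rho> where "\<rho> = (\<lambda>x. r x - (\<Sum>i\<in>F. c i * v i x))"
  define u where "u = (\<lambda>x. v j0 x - (\<Sum>i\<in>F. d i * v i x))"
  define \<alpha> where "\<alpha> = (if wdot S w u u = 0 then 0 else wdot S w \<rho> u / wdot S w u u)"
  define e where "e = (\<lambda>x. \<rho> x - \<alpha> * u x)"
  have e_F: "\<forall>j\<in>F. wdot S w e (v j) = 0"
    using c d unfolding e_def \<rho>_def u_def by (simp add: wdot_diff_left wdot_scale_left)
  have "wdot S w e u = wdot S w \<rho> u - \<alpha> * wdot S w u u"
    unfolding e_def by (simp only: wdot_diff_left wdot_scale_left)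
  then have "wdot S w e u = 0"
    by (simp add: \<alpha>_def wdot_orthogonal_if_self_eq_0)
  moreover have "v j0 = (\<lambda>x. u x + (\<Sum>i\<in>F. d i * v i x))"
    by (simp add: u_def)
  ultimately have e_j0: "wdot S w e (v j0) = 0"
    using wdot_orthogonal_lincomb[OF e_F, of d] by (simp add: wdot_commute[of S w e] wdot_add_left)
  have "e = (\<lambda>x. r x - (\<Sum>i\<in>insert j0 F. (if i = j0 then \<alpha> else c i - \<alpha> * d i) * v i x))"
    unfolding sum_lincomb_insert[OF insert.hyps] by (simp add: e_def \<rho>_def u_def algebra_simps)
  with e_F e_j0 show ?case
    by (intro exI[of _ "\<lambda>i. if i = j0 then \<alpha> else c i - \<alpha> * d i"]) simp
qed

end

lemma Xsp_coordinate: "x \<in> Xsp p m \<Longrightarrow> i < p \<Longrightarrow> x i \<in> {1..m}"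
  unfolding Xsp_def by (simp add: PiE_iff)

lemma finite_Xsp: "finite (Xsp p m)"
  unfolding Xsp_def by (simp add: finite_PiE)

definition coord_ind :: "nat \<times> nat \<Rightarrow> (nat \<Rightarrow> nat) \<Rightarrow> real" where
  "coord_ind j x = (if x (fst j) = snd j then 1 else 0)"

abbreviation coords :: "nat \<Rightarrow> nat \<Rightarrow> (nat \<times> nat) set" where
  "coords p m \<equiv> {..<p} \<times> {1..m}"

lemma sum_coord_ind:
  assumes "x \<in> Xsp p m"
  shows "(\<Sum>j\<in>coords p m. c j * coord_ind j x) = (\<Sum>i<p. c (i, x i))"
proof -
  have "(\<Sum>j\<in>coords p m. c j * coord_ind j x) = (\<Sum>i<p. \<Sum>a\<in>{1..m}. c (i, a) * coord_ind (i, a) x)"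
    by (simp add: sum.cartesian_product)
  also have "\<dots> = (\<Sum>i<p. c (i, x i))"
    using Xsp_coordinate[OF assms]
    by (intro sum.cong refl) (simp add: coord_ind_def if_distrib[of "\<lambda>t. c _ * t"] cong: if_cong)
  finally show ?thesis .
qed

lemma separable_iff_coord_lincomb:
  "separable p m f \<longleftrightarrow> (\<exists>c. \<forall>x\<in>Xsp p m. f x = (\<Sum>j\<in>coords p m. c j * coord_ind j x))"
  unfolding separable_def
proof
  assume "\<exists>\<xi>. \<forall>x\<in>Xsp p m. f x = (\<Sum>i<p. \<xi> i (x i))"
  then obtain \<xi> where "\<forall>x\<in>Xsp p m. f x = (\<Sum>i<p. \<xi> i (x i))" by blast
  then show "\<exists>c. \<forall>x\<in>Xsp p m. f x = (\<Sum>j\<in>coords p m. c j * coord_ind j x)"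
    using sum_coord_ind[of _ p m "case_prod \<xi>"] by (intro exI[of _ "case_prod \<xi>"]) simp
next
  assume "\<exists>c. \<forall>x\<in>Xsp p m. f x = (\<Sum>j\<in>coords p m. c j * coord_ind j x)"
  then obtain c where "\<forall>x\<in>Xsp p m. f x = (\<Sum>j\<in>coords p m. c j * coord_ind j x)" by blast
  then show "\<exists>\<xi>. \<forall>x\<in>Xsp p m. f x = (\<Sum>i<p. \<xi> i (x i))"
    using sum_coord_ind[of _ p m c] by (intro exI[of _ "curry c"]) simp
qed

lemma separable_coord_ind: "j \<in> coords p m \<Longrightarrow> separable p m (coord_ind j)"
  unfolding separable_iff_coord_lincomb
  by (intro exI[of _ "\<lambda>k. if k = j then 1 else 0"]) (simp add: if_distrib[of "\<lambda>t. t * _"] cong: if_cong)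

lemma separable_scale:
  assumes "separable p m f"
  shows "separable p m (\<lambda>x. t * f x)"
proof -
  obtain \<xi> where "\<forall>x\<in>Xsp p m. f x = (\<Sum>i<p. \<xi> i (x i))"
    using assms unfolding separable_def by blast
  then show ?thesis
    unfolding separable_def by (intro exI[of _ "\<lambda>i a. t * \<xi> i a"]) (simp add: sum_distrib_left)
qed

lemma separable_add_const:
  assumes "separable p m f" "0 < p"
  shows "separable p m (\<lambda>x. f x + t)"
proof -
  obtain \<xi> where \<xi>: "\<forall>x\<in>Xsp p m. f x = (\<Sum>i<p. \<xi> i (x i))"
    using assms(1) unfolding separable_def by blast
  show ?thesis
    unfolding separable_def
    by (intro exI[of _ "\<lambda>i a. \<xi> i a + (if i = 0 then t else 0)"]) (simp add: \<xi> sum.distrib assms(2))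
qed

lemma separable_const: "0 < p \<Longrightarrow> separable p m (\<lambda>_. t)"
  unfolding separable_def by (intro exI[of _ "\<lambda>i a. if i = 0 then t else 0"]) simp

lemma expect_cong:
  "(\<And>x y. x \<in> Xsp p m \<Longrightarrow> y \<in> {0, 1} \<Longrightarrow> h x y = h' x y) \<Longrightarrow> expect p m P h = expect p m P h'"
  unfolding expect_def by (intro sum.cong) auto

lemma expect_sum: "expect p m P (\<lambda>x y. \<Sum>k\<in>K. h k x y) = (\<Sum>k\<in>K. expect p m P (h k))"
proof -
  have "expect p m P (\<lambda>x y. \<Sum>k\<in>K. h k x y) = (\<Sum>x\<in>Xsp p m. \<Sum>k\<in>K. \<Sum>y\<in>{0, 1}. P x y * h k x y)"
    unfolding expect_def by (simp only: sum_distrib_left sum.swap[of _ "{0, 1}"])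
  also have "\<dots> = (\<Sum>k\<in>K. expect p m P (h k))"
    unfolding expect_def by (rule sum.swap)
  finally show ?thesis .
qed

lemma expect_scale: "expect p m P (\<lambda>x y. t * h x y) = t * expect p m P h"
  unfolding expect_def by (simp add: sum_distrib_left mult.left_commute distrib_left)

lemma classC_expect_separable_mult:
  assumes "P \<in> classC p m mu2 mu1" "\<forall>x\<in>Xsp p m. f x = (\<Sum>j\<in>coords p m. c j * coord_ind j x)"
  shows "expect p m P (\<lambda>x y. f x * g y)
    = (\<Sum>j\<in>coords p m. \<Sum>y\<in>{0, 1}. c j * g y * mu1 (fst j) (snd j) y)"
proof -
  have "expect p m P (\<lambda>x y. f x * g y) = expect p m P (\<lambda>x y. \<Sum>j\<in>coords p m. \<Sum>y'\<in>{0, 1}.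
      c j * g y' * (if x (fst j) = snd j \<and> y = y' then 1 else 0))"
    using assms(2) by (intro expect_cong) (auto simp: coord_ind_def sum_distrib_right intro!: sum.cong)
  also have "\<dots> = (\<Sum>j\<in>coords p m. \<Sum>y'\<in>{0, 1}.
      c j * g y' * expect p m P (\<lambda>x y. if x (fst j) = snd j \<and> y = y' then 1 else 0))"
    by (simp only: expect_sum expect_scale)
  also have "\<dots> = (\<Sum>j\<in>coords p m. \<Sum>y\<in>{0, 1}. c j * g y * mu1 (fst j) (snd j) y)"
    using assms(1) by (intro sum.cong refl) (auto simp: classC_def)
  finally show ?thesis .
qed

lemma classC_expect_separable_square:
  assumes "P \<in> classC p m mu2 mu1" "\<forall>x\<in>Xsp p m. f x = (\<Sum>j\<in>coords p m. c j * coord_ind j x)"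
  shows "expect p m P (\<lambda>x y. (f x)\<^sup>2)
    = (\<Sum>j\<in>coords p m. \<Sum>k\<in>coords p m. c j * c k * mu2 (fst j) (fst k) (snd j) (snd k))"
proof -
  have "expect p m P (\<lambda>x y. (f x)\<^sup>2) = expect p m P (\<lambda>x y. \<Sum>j\<in>coords p m. \<Sum>k\<in>coords p m.
      c j * c k * (if x (fst j) = snd j \<and> x (fst k) = snd k then 1 else 0))"
    using assms(2) by (intro expect_cong) (auto simp: power2_eq_square sum_product coord_ind_def intro!: sum.cong)
  also have "\<dots> = (\<Sum>j\<in>coords p m. \<Sum>k\<in>coords p m.
      c j * c k * expect p m P (\<lambda>x y. if x (fst j) = snd j \<and> x (fst k) = snd k then 1 else 0))"
    by (simp only: expect_sum expect_scale)
  also have "\<dots> = (\<Sum>j\<in>coords p m. \<Sum>k\<in>coords p m. c j * c k * mu2 (fst j) (fst k) (snd j) (snd k))"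
    using assms(1) by (intro sum.cong refl) (auto simp: classC_def)
  finally show ?thesis .
qed

lemma classC_separable_expect_eq:
  assumes "P \<in> classC p m mu2 mu1" "Q \<in> classC p m mu2 mu1" "separable p m f"
  shows "expect p m P (\<lambda>x y. f x * g y) = expect p m Q (\<lambda>x y. f x * g y)"
    and "expect p m P (\<lambda>x y. (f x)\<^sup>2) = expect p m Q (\<lambda>x y. (f x)\<^sup>2)"
proof -
  obtain c where c: "\<forall>x\<in>Xsp p m. f x = (\<Sum>j\<in>coords p m. c j * coord_ind j x)"
    using assms(3) unfolding separable_iff_coord_lincomb by blast
  show "expect p m P (\<lambda>x y. f x * g y) = expect p m Q (\<lambda>x y. f x * g y)"
    by (simp only: classC_expect_separable_mult[OF assms(1) c] classC_expect_separable_mult[OF assms(2) c])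
  show "expect p m P (\<lambda>x y. (f x)\<^sup>2) = expect p m Q (\<lambda>x y. (f x)\<^sup>2)"
    by (simp only: classC_expect_separable_square[OF assms(1) c] classC_expect_separable_square[OF assms(2) c])
qed

lemma classC_feasible_eq:
  assumes "P \<in> classC p m mu2 mu1" "Q \<in> classC p m mu2 mu1" "separable p m f" "0 < p"
  shows "hgr_feasible p m P f g \<longleftrightarrow> hgr_feasible p m Q f g"
proof -
  have one: "separable p m (\<lambda>_. 1)" using separable_const[OF assms(4)] .
  have "expect p m P (\<lambda>x y. f x) = expect p m Q (\<lambda>x y. f x)"
    using classC_separable_expect_eq(1)[OF assms(1-3), of "\<lambda>_. 1"] by simp
  moreover have "expect p m P (\<lambda>x y. h y) = expect p m Q (\<lambda>x y. h y)" for h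
    using classC_separable_expect_eq(1)[OF assms(1,2) one, of h] by simp
  ultimately show ?thesis
    unfolding hgr_feasible_def classC_separable_expect_eq(2)[OF assms(1-3)] by simp
qed

lemma classC_rho_lb_eq:
  assumes "P \<in> classC p m mu2 mu1" "Q \<in> classC p m mu2 mu1" "0 < p"
  shows "rho_lb p m P = rho_lb p m Q"
  unfolding rho_lb_def
proof (intro arg_cong[where f = Sup] Collect_cong iffI; elim exE conjE)
  fix v f g
  assume "separable p m f"
  note same = classC_separable_expect_eq(1)[OF assms(1,2) this] classC_feasible_eq[OF assms(1,2) this assms(3)]
  show "\<exists>f g. v = expect p m Q (\<lambda>x y. f x * g y) \<and> hgr_feasible p m Q f g \<and> separable p m f"
    if "v = expect p m P (\<lambda>x y. f x * g y)" "hgr_feasible p m P f g"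
    using that same \<open>separable p m f\<close> by metis
  show "\<exists>f g. v = expect p m P (\<lambda>x y. f x * g y) \<and> hgr_feasible p m P f g \<and> separable p m f"
    if "v = expect p m Q (\<lambda>x y. f x * g y)" "hgr_feasible p m Q f g"
    using that same \<open>separable p m f\<close> by metis
qed

locale hgr_law =
  fixes p m :: nat and P :: "(nat \<Rightarrow> nat) \<Rightarrow> nat \<Rightarrow> real"
  assumes law: "is_dist p m P" and p_pos: "0 < p"
    and prob1_pos: "0 < expect p m P (\<lambda>x y. if y = 1 then 1 else 0)"
    and prob1_less_1: "expect p m P (\<lambda>x y. if y = 1 then 1 else 0) < 1"
begin

abbreviation "S \<equiv> Xsp p m"

definition pX :: "(nat \<Rightarrow> nat) \<Rightarrow> real" where
  "pX x = P x 0 + P x 1"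

definition prob1 :: real where
  "prob1 = (\<Sum>x\<in>S. P x 1)"

text \<open>\<open>E[Y | X = x] - P(Y = 1)\<close>, with the junk value 0 on null atoms of \<open>X\<close>.\<close>
definition reg :: "(nat \<Rightarrow> nat) \<Rightarrow> real" where
  "reg x = (if pX x = 0 then 0 else P x 1 / pX x - prob1)"

definition g_jump :: real where
  "g_jump = 1 / sqrt (prob1 * (1 - prob1))"

definition g_opt :: "nat \<Rightarrow> real" where
  "g_opt y = g_jump * (real y - prob1)"

definition corr_values :: "(((nat \<Rightarrow> nat) \<Rightarrow> real) \<Rightarrow> bool) \<Rightarrow> real set" where
  "corr_values \<Phi> = {expect p m P (\<lambda>x y. f x * g y) | f g. hgr_feasible p m P f g \<and> \<Phi> f}"

abbreviation "wd \<equiv> wdot S pX"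

lemma pX_nonneg: "x \<in> S \<Longrightarrow> 0 \<le> pX x"
  using law unfolding is_dist_def pX_def by auto

lemma sum_pX: "(\<Sum>x\<in>S. pX x) = 1"
  using law unfolding is_dist_def expect_def pX_def by simp

lemma prob1_bounds: "0 < prob1" "prob1 < 1"
  using prob1_pos prob1_less_1 unfolding expect_def prob1_def by simp_all

lemma P_eq_reg:
  assumes "x \<in> S"
  shows "P x 1 = pX x * (reg x + prob1)" "P x 0 = pX x * (1 - prob1 - reg x)"
proof -
  show P1: "P x 1 = pX x * (reg x + prob1)"
  proof (cases "pX x = 0")
    case True
    moreover have "0 \<le> P x 0" "0 \<le> P x 1"
      using law assms unfolding is_dist_def by auto
    ultimately have "P x 1 = 0"
      unfolding pX_def by linarith
    with True show ?thesis by simp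
  next
    case False
    then show ?thesis by (simp add: reg_def)
  qed
  then show "P x 0 = pX x * (1 - prob1 - reg x)"
    unfolding pX_def by (simp add: algebra_simps)
qed

lemma expect_fun_X: "expect p m P (\<lambda>x y. f x) = wd f (\<lambda>_. 1)"
  unfolding expect_def wdot_def pX_def by (simp add: algebra_simps)

lemma expect_square_X: "expect p m P (\<lambda>x y. (f x)\<^sup>2) = wd f f"
  unfolding expect_def wdot_def pX_def by (simp add: algebra_simps power2_eq_square)

lemma expect_fun_Y: "expect p m P (\<lambda>x y. g y) = g 0 * (1 - prob1) + g 1 * prob1"
proof -
  have "(\<Sum>x\<in>S. P x 0) = 1 - prob1"
    using sum_pX unfolding pX_def prob1_def by (simp add: sum.distrib)
  then show ?thesis
    unfolding expect_def prob1_def by (simp add: sum.distrib sum_distrib_left[symmetric] mult.commute)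
qed

lemma expect_mult:
  "expect p m P (\<lambda>x y. f x * g y) = g 0 * wd f (\<lambda>_. 1) + (g 1 - g 0) * (wd f reg + prob1 * wd f (\<lambda>_. 1))"
proof -
  have "expect p m P (\<lambda>x y. f x * g y)
      = (\<Sum>x\<in>S. g 0 * (pX x * f x) + (g 1 - g 0) * (pX x * f x * reg x + prob1 * (pX x * f x)))"
    unfolding expect_def by (intro sum.cong refl) (simp add: P_eq_reg[simplified] algebra_simps)
  then show ?thesis
    unfolding wdot_def by (simp add: ring_distribs sum.distrib sum_distrib_left mult_ac)
qed

lemma reg_centered: "wd reg (\<lambda>_. 1) = 0"
proof -
  have "wd reg (\<lambda>_. 1) = (\<Sum>x\<in>S. P x 1 - prob1 * pX x)"
    unfolding wdot_def by (intro sum.cong refl) (simp add: P_eq_reg[simplified] algebra_simps)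
  also have "\<dots> = 0"
    by (simp add: sum_subtractf sum_distrib_left[symmetric] sum_pX prob1_def)
  finally show ?thesis .
qed

lemma feasible_X:
  assumes "hgr_feasible p m P f g"
  shows "wd f (\<lambda>_. 1) = 0" "wd f f = 1"
  using assms unfolding hgr_feasible_def expect_square_X expect_fun_X by simp_all

lemma feasible_corr:
  "hgr_feasible p m P f g \<Longrightarrow> expect p m P (\<lambda>x y. f x * g y) = (g 1 - g 0) * wd f reg"
  by (simp add: expect_mult feasible_X)

text \<open>For a two-point law \<open>Var g(Y) = \<pi>(1 - \<pi>)(g 1 - g 0)\<^sup>2\<close>.\<close>
lemma feasible_jump:
  assumes "hgr_feasible p m P f g"
  shows "\<bar>g 1 - g 0\<bar> = g_jump"
proof -
  have g1: "g 0 * (1 - prob1) + g 1 * prob1 = 0"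
    and g2: "(g 0)\<^sup>2 * (1 - prob1) + (g 1)\<^sup>2 * prob1 = 1"
    using assms unfolding hgr_feasible_def expect_fun_Y by simp_all
  have "prob1 * (1 - prob1) * (g 1 - g 0)\<^sup>2
      = ((g 0)\<^sup>2 * (1 - prob1) + (g 1)\<^sup>2 * prob1) - (g 0 * (1 - prob1) + g 1 * prob1)\<^sup>2"
    by (simp add: algebra_simps power2_eq_square)
  then have "(g 1 - g 0)\<^sup>2 = 1 / (prob1 * (1 - prob1))"
    using g1 g2 prob1_bounds by (simp add: eq_divide_eq mult.commute)
  then have "sqrt ((g 1 - g 0)\<^sup>2) = g_jump"
    unfolding g_jump_def by (simp add: real_sqrt_divide)
  then show ?thesis by simp
qed

lemma corr_le:
  assumes "hgr_feasible p m P f g"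
  shows "expect p m P (\<lambda>x y. f x * g y) \<le> g_jump * \<bar>wd f reg\<bar>"
proof -
  have "expect p m P (\<lambda>x y. f x * g y) = (g 1 - g 0) * wd f reg"
    by (rule feasible_corr[OF assms])
  also have "\<dots> \<le> \<bar>g 1 - g 0\<bar> * \<bar>wd f reg\<bar>"
    by (simp add: abs_mult[symmetric])
  also have "\<dots> = g_jump * \<bar>wd f reg\<bar>"
    by (simp only: feasible_jump[OF assms])
  finally show ?thesis .
qed

lemma g_opt_feasible:
  assumes "wd f (\<lambda>_. 1) = 0" "wd f f = 1"
  shows "hgr_feasible p m P f g_opt"
proof -
  have "(g_opt 0)\<^sup>2 * (1 - prob1) + (g_opt 1)\<^sup>2 * prob1 = g_jump\<^sup>2 * (prob1 * (1 - prob1))"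
    unfolding g_opt_def by (simp add: algebra_simps power2_eq_square)
  also have "\<dots> = 1"
    using prob1_bounds by (simp add: g_jump_def power_divide)
  finally show ?thesis
    using assms expect_fun_Y[of g_opt] expect_fun_Y[of "\<lambda>y. (g_opt y)\<^sup>2"]
    unfolding hgr_feasible_def expect_square_X expect_fun_X g_opt_def by (simp add: algebra_simps)
qed

lemma corr_g_opt:
  "wd f (\<lambda>_. 1) = 0 \<Longrightarrow> expect p m P (\<lambda>x y. f x * g_opt y) = g_jump * wd f reg"
  unfolding expect_mult by (simp add: g_opt_def algebra_simps)

lemma g_jump_pos: "0 < g_jump"
  using prob1_bounds unfolding g_jump_def by simp

lemma corr_values_mono: "(\<And>f. \<Phi> f \<Longrightarrow> \<Psi> f) \<Longrightarrow> corr_values \<Phi> \<subseteq> corr_values \<Psi>"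
  unfolding corr_values_def by blast

lemma rho_m_eq_Sup: "rho_m p m P = Sup (corr_values (\<lambda>_. True))"
  unfolding rho_m_def corr_values_def by simp

lemma rho_lb_eq_Sup: "rho_lb p m P = Sup (corr_values (separable p m))"
  unfolding rho_lb_def corr_values_def ..

lemma normalized_mem_corr_values:
  assumes "\<Phi> f" "\<And>f t. \<Phi> f \<Longrightarrow> \<Phi> (\<lambda>x. t * f x)" "wd f (\<lambda>_. 1) = 0" "0 < wd f f"
  shows "g_jump * (wd f reg / sqrt (wd f f)) \<in> corr_values \<Phi>"
proof -
  define f' where "f' = (\<lambda>x. (1 / sqrt (wd f f)) * f x)"
  have f': "wd f' (\<lambda>_. 1) = 0" "wd f' f' = 1"
    unfolding f'_def wdot_scale_left wdot_scale_right using assms(3,4) by simp_all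
  have "hgr_feasible p m P f' g_opt"
    by (rule g_opt_feasible[OF f'])
  moreover have "\<Phi> f'"
    unfolding f'_def by (rule assms(2)[OF assms(1)])
  ultimately have "expect p m P (\<lambda>x y. f' x * g_opt y) \<in> corr_values \<Phi>"
    unfolding corr_values_def by blast
  moreover have "expect p m P (\<lambda>x y. f' x * g_opt y) = g_jump * wd f' reg"
    by (rule corr_g_opt[OF f'(1)])
  moreover have "wd f' reg = wd f reg / sqrt (wd f f)"
    unfolding f'_def wdot_scale_left by simp
  ultimately show ?thesis by simp
qed

text \<open>Both maximal correlations are computed by this lemma: for \<open>\<rho>\<^sub>m\<close> with \<open>s = reg\<close>,
  for \<open>\<rho>\<^sup>l\<^sup>b\<close> with \<open>s\<close> the projection of \<open>reg\<close> onto the separable functions.\<close>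
lemma Sup_corr_values:
  assumes nonempty: "corr_values \<Phi> \<noteq> {}" and s: "\<Phi> s"
    and scale: "\<And>f t. \<Phi> f \<Longrightarrow> \<Phi> (\<lambda>x. t * f x)"
    and s_centered: "wd s (\<lambda>_. 1) = 0" and reg_s: "\<And>f. \<Phi> f \<Longrightarrow> wd f reg = wd f s"
  shows "Sup (corr_values \<Phi>) = g_jump * sqrt (wd s s)"
proof (rule cSup_eq_maximum)
  show "g_jump * sqrt (wd s s) \<in> corr_values \<Phi>"
  proof (cases "wd s s = 0")
    case True
    from nonempty obtain f g where fg: "hgr_feasible p m P f g" "\<Phi> f"
      unfolding corr_values_def by blast
    then have "expect p m P (\<lambda>x y. f x * g_opt y) \<in> corr_values \<Phi>"
      using g_opt_feasible feasible_X unfolding corr_values_def by blast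
    moreover have "expect p m P (\<lambda>x y. f x * g_opt y) = 0"
      using fg corr_g_opt feasible_X reg_s wdot_orthogonal_if_self_eq_0[of S pX, OF pX_nonneg True] by simp
    ultimately show ?thesis
      using True by simp
  next
    case False
    then have "0 < wd s s"
      using wdot_self_nonneg[of S pX, OF pX_nonneg, where a = s] by simp
    then show ?thesis
      using normalized_mem_corr_values[OF s scale s_centered] reg_s[OF s] by (simp add: real_div_sqrt)
  qed
next
  fix v assume "v \<in> corr_values \<Phi>"
  then obtain f g where v: "v = expect p m P (\<lambda>x y. f x * g y)" and fg: "hgr_feasible p m P f g" "\<Phi> f"
    unfolding corr_values_def by blast
  have "\<bar>wd f s\<bar> \<le> sqrt (wd s s)"
    using wdot_Cauchy_Schwarz[of S pX, OF pX_nonneg, where a = f and b = s] feasible_X[OF fg(1)] by simp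
  moreover have "v \<le> g_jump * \<bar>wd f s\<bar>"
    using corr_le[OF fg(1)] reg_s[OF fg(2)] unfolding v by simp
  ultimately show "v \<le> g_jump * sqrt (wd s s)"
    using g_jump_pos by (smt (verit) mult_left_mono)
qed

lemma rho_m_eq_norm: "corr_values (\<lambda>_. True) \<noteq> {} \<Longrightarrow> rho_m p m P = g_jump * sqrt (wd reg reg)"
  unfolding rho_m_eq_Sup by (rule Sup_corr_values) (simp_all add: reg_centered)

lemma rho_lb_eq_norm:
  assumes "corr_values (separable p m) \<noteq> {}" "separable p m s"
    and "\<And>f. separable p m f \<Longrightarrow> wd (\<lambda>x. reg x - s x) f = 0"
  shows "rho_lb p m P = g_jump * sqrt (wd s s)"
  unfolding rho_lb_eq_Sup
proof (rule Sup_corr_values[OF assms(1,2) separable_scale])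
  show "wd s (\<lambda>_. 1) = 0"
    using assms(3)[OF separable_const[OF p_pos]] reg_centered by (simp add: wdot_diff_left)
  show "wd f reg = wd f s" if "separable p m f" for f
    using assms(3)[OF that] by (simp add: wdot_diff_left wdot_commute[of _ _ f])
qed

lemma corr_values_separable_nonempty:
  assumes "corr_values (\<lambda>_. True) \<noteq> {}"
  shows "corr_values (separable p m) \<noteq> {}"
proof -
  obtain f g where "hgr_feasible p m P f g"
    using assms unfolding corr_values_def by blast
  then obtain x x' where x: "x \<in> S" "x' \<in> S" "x \<noteq> x'" "pX x \<noteq> 0" "pX x' \<noteq> 0"
    using two_support_points[of S pX, OF pX_nonneg sum_pX] feasible_X by metis
  then obtain i where i: "i < p" "x i \<noteq> x' i"
    unfolding Xsp_def by (metis PiE_ext lessThan_iff)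
  define \<mu> where "\<mu> = wd (coord_ind (i, x i)) (\<lambda>_. 1)"
  define d where "d = (\<lambda>y. coord_ind (i, x i) y - \<mu>)"
  have "separable p m (coord_ind (i, x i))"
    using i(1) Xsp_coordinate[OF x(1) i(1)] by (intro separable_coord_ind) simp
  then have "separable p m d"
    using separable_add_const[OF _ p_pos, where t = "- \<mu>"] by (simp add: d_def)
  moreover have "wd d (\<lambda>_. 1) = 0"
    unfolding d_def wdot_diff_left \<mu>_def[symmetric]
    by (simp add: wdot_def sum_distrib_right[symmetric] sum_pX)
  moreover have "0 < wd d d"
    using wdot_self_pos[of S pX, OF pX_nonneg finite_Xsp x(1,2,4,5)] i(2)
    by (simp add: d_def coord_ind_def)
  ultimately show ?thesis
    using normalized_mem_corr_values[where \<Phi> = "separable p m"] separable_scale by blast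
qed

text \<open>Separable functions are the span of the indicators of the events \<open>X\<^sub>i = a\<close>.\<close>
lemma reg_projection:
  obtains s where "separable p m s" "\<And>f. separable p m f \<Longrightarrow> wd (\<lambda>x. reg x - s x) f = 0"
proof -
  obtain c where c: "\<forall>j\<in>coords p m. wd (\<lambda>x. reg x - (\<Sum>i\<in>coords p m. c i * coord_ind i x)) (coord_ind j) = 0"
    using wdot_projection[of S pX, OF pX_nonneg, of "coords p m" reg coord_ind] by auto
  define s where "s = (\<lambda>x. \<Sum>i\<in>coords p m. c i * coord_ind i x)"
  have "separable p m s"
    unfolding separable_iff_coord_lincomb s_def by blast
  moreover have "wd (\<lambda>x. reg x - s x) f = 0" if f: "separable p m f" for f
  proof -
    obtain c' where c': "\<forall>x\<in>S. f x = (\<Sum>j\<in>coords p m. c' j * coord_ind j x)"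
      using f unfolding separable_iff_coord_lincomb by blast
    have "wd (\<lambda>x. reg x - s x) f = wd (\<lambda>x. reg x - s x) (\<lambda>x. \<Sum>j\<in>coords p m. c' j * coord_ind j x)"
      using c' by (intro wdot_cong_support) simp_all
    also have "\<dots> = 0"
      using c unfolding s_def by (rule wdot_orthogonal_lincomb)
    finally show ?thesis .
  qed
  ultimately show ?thesis
    using that by blast
qed

lemma rho_lb_le_rho_m: "rho_lb p m P \<le> rho_m p m P"
proof (cases "corr_values (\<lambda>_. True) = {}")
  case True
  then have "corr_values (separable p m) = {}"
    using corr_values_mono[of "separable p m" "\<lambda>_. True"] by blast
  with True show ?thesis
    unfolding rho_m_eq_Sup rho_lb_eq_Sup by simp
next
  case False
  obtain s where s: "separable p m s" "\<And>f. separable p m f \<Longrightarrow> wd (\<lambda>x. reg x - s x) f = 0"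
    using reg_projection by blast
  have "wd s s \<le> wd reg reg"
    using wdot_pythagoras[of S pX reg s] s wdot_self_nonneg[of S pX, OF pX_nonneg, where a = "\<lambda>x. reg x - s x"]
    by simp
  then show ?thesis
    using rho_m_eq_norm[OF False] rho_lb_eq_norm[OF corr_values_separable_nonempty[OF False] s] g_jump_pos
    by simp
qed

lemma rho_m_eq_rho_lb_iff_separable:
  "rho_m p m P = rho_lb p m P \<longleftrightarrow> (\<exists>s. separable p m s \<and> (\<forall>x\<in>S. pX x \<noteq> 0 \<longrightarrow> reg x = s x))"
proof
  assume eq: "rho_m p m P = rho_lb p m P"
  obtain s where s: "separable p m s" "\<And>f. separable p m f \<Longrightarrow> wd (\<lambda>x. reg x - s x) f = 0"
    using reg_projection by blast
  have pyth: "wd reg reg = wd s s + wd (\<lambda>x. reg x - s x) (\<lambda>x. reg x - s x)"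
    using wdot_pythagoras[of S pX reg s] s by simp
  show "\<exists>s. separable p m s \<and> (\<forall>x\<in>S. pX x \<noteq> 0 \<longrightarrow> reg x = s x)"
  proof (cases "wd (\<lambda>x. reg x - s x) (\<lambda>x. reg x - s x) = 0")
    case True
    then show ?thesis
      using s(1) wdot_self_eq_0_iff[of S pX, OF pX_nonneg finite_Xsp] by auto
  next
    case False
    then have "0 < wd (\<lambda>x. reg x - s x) (\<lambda>x. reg x - s x)"
      using wdot_self_nonneg[of S pX, OF pX_nonneg] by (simp add: less_le)
    then have "wd s s < wd reg reg" "0 < wd reg reg"
      using pyth wdot_self_nonneg[of S pX, OF pX_nonneg, where a = s] by linarith+
    moreover have "corr_values (\<lambda>_. True) \<noteq> {}"
      using normalized_mem_corr_values[of "\<lambda>_. True" reg] reg_centered \<open>0 < wd reg reg\<close> by blast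
    ultimately have "rho_lb p m P < rho_m p m P"
      using rho_m_eq_norm rho_lb_eq_norm[OF corr_values_separable_nonempty s] g_jump_pos by simp
    with eq show ?thesis by simp
  qed
next
  assume "\<exists>s. separable p m s \<and> (\<forall>x\<in>S. pX x \<noteq> 0 \<longrightarrow> reg x = s x)"
  then obtain s where s: "separable p m s" "\<And>x. x \<in> S \<Longrightarrow> pX x \<noteq> 0 \<Longrightarrow> reg x = s x"
    by blast
  have orth: "wd (\<lambda>x. reg x - s x) f = 0" for f
  proof -
    have "wd (\<lambda>x. reg x - s x) f = wd (\<lambda>_. 0) f"
      using s(2) by (intro wdot_cong_support) simp_all
    then show ?thesis by (simp add: wdot_def)
  qed
  have "wd s s = wd reg reg"
    using s(2) by (intro wdot_cong_support) simp_all
  show "rho_m p m P = rho_lb p m P"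
  proof (cases "corr_values (\<lambda>_. True) = {}")
    case True
    then have "corr_values (separable p m) = {}"
      using corr_values_mono[of "separable p m" "\<lambda>_. True"] by blast
    with True show ?thesis
      unfolding rho_m_eq_Sup rho_lb_eq_Sup by simp
  next
    case False
    then show ?thesis
      using rho_m_eq_norm rho_lb_eq_norm[OF corr_values_separable_nonempty s(1) orth] \<open>wd s s = wd reg reg\<close>
      by simp
  qed
qed

lemma rho_m_eq_rho_lb_iff:
  "rho_m p m P = rho_lb p m P \<longleftrightarrow>
    (\<exists>fs. \<forall>x\<in>S. P x 0 + P x 1 > 0 \<longrightarrow> P x 1 / (P x 0 + P x 1) = (\<Sum>i<p. fs i (x i)))"
  unfolding rho_m_eq_rho_lb_iff_separable
proof
  assume "\<exists>s. separable p m s \<and> (\<forall>x\<in>S. pX x \<noteq> 0 \<longrightarrow> reg x = s x)"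
  then obtain s where s: "separable p m s" "\<forall>x\<in>S. pX x \<noteq> 0 \<longrightarrow> reg x = s x"
    by blast
  have "separable p m (\<lambda>x. s x + prob1)"
    using separable_add_const[OF s(1) p_pos] .
  then obtain \<xi> where "\<forall>x\<in>S. s x + prob1 = (\<Sum>i<p. \<xi> i (x i))"
    unfolding separable_def by blast
  then show "\<exists>fs. \<forall>x\<in>S. P x 0 + P x 1 > 0 \<longrightarrow> P x 1 / (P x 0 + P x 1) = (\<Sum>i<p. fs i (x i))"
  proof (intro exI[of _ \<xi>] ballI impI)
    fix x assume x: "x \<in> S" "P x 0 + P x 1 > 0"
    with s(2) have "P x 1 / (P x 0 + P x 1) - prob1 = s x"
      by (simp add: reg_def pX_def)
    moreover assume "\<forall>x\<in>S. s x + prob1 = (\<Sum>i<p. \<xi> i (x i))"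
    ultimately show "P x 1 / (P x 0 + P x 1) = (\<Sum>i<p. \<xi> i (x i))"
      using x(1) by fastforce
  qed
next
  assume "\<exists>fs. \<forall>x\<in>S. P x 0 + P x 1 > 0 \<longrightarrow> P x 1 / (P x 0 + P x 1) = (\<Sum>i<p. fs i (x i))"
  then obtain fs where fs: "\<forall>x\<in>S. P x 0 + P x 1 > 0 \<longrightarrow> P x 1 / (P x 0 + P x 1) = (\<Sum>i<p. fs i (x i))"
    by blast
  have "separable p m (\<lambda>x. (\<Sum>i<p. fs i (x i)) + - prob1)"
    by (rule separable_add_const[OF _ p_pos]) (auto simp: separable_def)
  moreover have "reg x = (\<Sum>i<p. fs i (x i)) + - prob1" if "x \<in> S" "pX x \<noteq> 0" for x
    using that fs pX_nonneg[OF that(1)] by (simp add: reg_def pX_def)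
  ultimately show "\<exists>s. separable p m s \<and> (\<forall>x\<in>S. pX x \<noteq> 0 \<longrightarrow> reg x = s x)"
    by blast
qed

end

theorem theorem3:
  fixes p m :: nat
    and mu2 :: "nat \<Rightarrow> nat \<Rightarrow> nat \<Rightarrow> nat \<Rightarrow> real"
    and mu1 :: "nat \<Rightarrow> nat \<Rightarrow> nat \<Rightarrow> real"
  assumes "p \<ge> 1"
    and "classC p m mu2 mu1 \<noteq> {}"
    and "\<forall>P\<in>classC p m mu2 mu1.
           0 < expect p m P (\<lambda>x y. if y = 1 then 1 else 0) \<and>
           expect p m P (\<lambda>x y. if y = 1 then 1 else 0) < 1"
  shows "(\<exists>P\<in>classC p m mu2 mu1.
            rho_m p m P = rho_lb_C p m mu2 mu1 \<and>
            (\<forall>Q\<in>classC p m mu2 mu1. rho_m p m P \<le> rho_m p m Q))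
         \<longleftrightarrow>
         (\<exists>P\<in>classC p m mu2 mu1. \<exists>fs :: nat \<Rightarrow> nat \<Rightarrow> real.
            \<forall>x\<in>Xsp p m. P x 0 + P x 1 > 0 \<longrightarrow>
               P x 1 / (P x 0 + P x 1) = (\<Sum>i<p. fs i (x i)))"
proof -
  let ?C = "classC p m mu2 mu1"
  have law: "hgr_law p m P" if "P \<in> ?C" for P
    using that assms(1,3) unfolding classC_def by unfold_locales auto
  have some_law: "(SOME P. P \<in> ?C) \<in> ?C"
    using assms(2) by (simp add: some_in_eq)
  have rho_lb_C: "rho_lb_C p m mu2 mu1 = rho_lb p m P" if "P \<in> ?C" for P
    unfolding rho_lb_C_def using classC_rho_lb_eq[OF some_law that] assms(1) by simp
  show ?thesis
  proof
    assume "\<exists>P\<in>?C. rho_m p m P = rho_lb_C p m mu2 mu1 \<and> (\<forall>Q\<in>?C. rho_m p m P \<le> rho_m p m Q)"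
    then obtain P where P: "P \<in> ?C" "rho_m p m P = rho_lb p m P"
      using rho_lb_C by auto
    then show "\<exists>P\<in>?C. \<exists>fs. \<forall>x\<in>Xsp p m. P x 0 + P x 1 > 0 \<longrightarrow> P x 1 / (P x 0 + P x 1) = (\<Sum>i<p. fs i (x i))"
      using hgr_law.rho_m_eq_rho_lb_iff[OF law[OF P(1)]] by blast
  next
    assume "\<exists>P\<in>?C. \<exists>fs. \<forall>x\<in>Xsp p m. P x 0 + P x 1 > 0 \<longrightarrow> P x 1 / (P x 0 + P x 1) = (\<Sum>i<p. fs i (x i))"
    then obtain P where P: "P \<in> ?C" "rho_m p m P = rho_lb p m P"
      using hgr_law.rho_m_eq_rho_lb_iff[OF law] by blast
    have "rho_m p m P \<le> rho_m p m Q" if "Q \<in> ?C" for Q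
      using P rho_lb_C[OF P(1)] rho_lb_C[OF that] hgr_law.rho_lb_le_rho_m[OF law[OF that]] by simp
    with P show "\<exists>P\<in>?C. rho_m p m P = rho_lb_C p m mu2 mu1 \<and> (\<forall>Q\<in>?C. rho_m p m P \<le> rho_m p m Q)"
      using rho_lb_C by auto
  qed
qed

end
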